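(* Let $A\in\mathbb{R}^{n\times n}$, let $\lambda\in\mathbb{R}$, and let $v\in\mathbb{R}^{n\times1}$ and $u\in\mathbb{R}^{1\times n}$ satisfy $Av=\lambda v$, $uA=\lambda u$ and $uv=1$. Then for every row vector $u'\in\mathbb{R}^{1\times n}$ with $u'v=1$ there exists a matrix $Z$ conjugate (similar) to $A$ such that (i) $u'Z=\lambda u'$; (ii) $Zv=\lambda v$; and (iii) for every row vector $w$ and every scalar $\mu\neq\lambda$ with $wA=\mu w$, one has $wZ=\mu w$. *)

theory Defs
  imports "HOL-Analysis.Analysis"
begin

definition similar_matrix :: "real^'n^'n \<Rightarrow> real^'n^'n \<Rightarrow> bool" where
  "similar_matrix Z A \<longleftrightarrow> (\<exists>P. invertible P \<and> Z = P ** A ** matrix_inv P)"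

end

theory Submission
  imports Defs
begin

text \<open>Conjugate \<open>A\<close> by the transvection \<open>T = I + v d\<^sup>T\<close> with \<open>d = u - u'\<close>. Since
  \<open>d \<bullet> v = 0\<close>, the inverse of \<open>T\<close> is \<open>I - v d\<^sup>T\<close>, both fix \<open>v\<close>, and acting on row vectors
  they interchange \<open>u'\<close> and \<open>u\<close> and fix every row vector orthogonal to \<open>v\<close>. A left
  eigenvector of \<open>A\<close> for an eigenvalue \<open>m \<noteq> l\<close> is orthogonal to the right eigenvector \<open>v\<close>,
  so all the required eigenvectors are transported from \<open>A\<close> to \<open>Z = T A T\<^sup>-\<^sup>1\<close>.\<close>

definition transvection :: "real^'n \<Rightarrow> real^'n \<Rightarrow> real^'n^'n" where
  "transvection v d = mat 1 + (\<chi> i j. v$i * d$j)"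

lemma vector_matrix_mult_transvection:
  "y v* transvection v d = y + (y \<bullet> v) *\<^sub>R d"
  by (simp add: transvection_def vec_eq_iff vector_matrix_mult_def mat_def inner_vec_def
      sum.distrib sum_distrib_left sum_distrib_right algebra_simps
      if_distrib[of "\<lambda>x. _ * x"] cong: if_cong)

lemma matrix_vector_mult_transvection:
  "transvection v d *v x = x + (d \<bullet> x) *\<^sub>R v"
  by (simp add: transvection_def vec_eq_iff matrix_vector_mult_def mat_def inner_vec_def
      sum.distrib sum_distrib_left algebra_simps
      if_distrib[of "\<lambda>x. x * _"] if_distrib[of "\<lambda>x. _ * x"] cong: if_cong)

lemma transvection_mult_transvection_uminus:
  assumes "d \<bullet> v = 0"
  shows "transvection v d ** transvection v (- d) = mat 1"
proof -
  have "transvection v d *v (transvection v (- d) *v x) = x" for x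
    using assms by (simp add: matrix_vector_mult_transvection inner_add_right inner_diff_right
        inner_commute)
  then show ?thesis
    by (simp add: matrix_eq matrix_vector_mul_assoc)
qed

lemma matrix_inv_unique:
  fixes P Q :: "real^'n^'n"
  assumes "P ** Q = mat 1" and "Q ** P = mat 1"
  shows "matrix_inv P = Q"
  unfolding matrix_inv_def
proof (rule some_equality)
  fix Q' assume Q': "P ** Q' = mat 1 \<and> Q' ** P = mat 1"
  have "Q' = (Q' ** P) ** Q"
    using assms(1) by (simp add: matrix_mul_assoc[symmetric])
  then show "Q' = Q"
    using Q' by simp
qed (use assms in simp)

lemma similar_matrix_conjugate:
  fixes P A Q :: "real^'n^'n"
  assumes "P ** Q = mat 1" and "Q ** P = mat 1"
  shows "similar_matrix (P ** A ** Q) A"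
proof -
  have "invertible P"
    unfolding invertible_def using assms by blast
  then show ?thesis
    unfolding similar_matrix_def by (intro exI[of _ P]) (simp add: matrix_inv_unique[OF assms])
qed

lemma left_eigenvector_conjugate:
  fixes P A Q :: "real^'n^'n"
  assumes "x v* P = y" and "y v* A = m *\<^sub>R y" and "y v* Q = x"
  shows "x v* (P ** A ** Q) = m *\<^sub>R x"
proof -
  have "x v* (P ** A ** Q) = ((x v* P) v* A) v* Q"
    by (simp add: vector_matrix_mul_assoc)
  then show ?thesis
    using assms by (simp add: scaleR_vector_matrix_assoc)
qed

lemma right_eigenvector_conjugate:
  fixes P A Q :: "real^'n^'n"
  assumes "Q *v x = y" and "A *v y = m *\<^sub>R y" and "P *v y = x"
  shows "(P ** A ** Q) *v x = m *\<^sub>R x"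
proof -
  have "(P ** A ** Q) *v x = P *v (A *v (Q *v x))"
    by (simp add: matrix_vector_mul_assoc matrix_mul_assoc)
  then show ?thesis
    using assms by (simp add: matrix_vector_mult_scaleR)
qed

lemma left_right_eigenvectors_orthogonal:
  fixes A :: "real^'n^'n"
  assumes "A *v v = l *\<^sub>R v" and "w v* A = m *\<^sub>R w" and "m \<noteq> l"
  shows "w \<bullet> v = 0"
proof -
  have "m * (w \<bullet> v) = l * (w \<bullet> v)"
    using dot_lmul_matrix[of w A v] assms(1,2) by simp
  then show ?thesis
    using assms(3) by simp
qed

theorem lemma4p2:
  fixes A :: "real^'n^'n" and l :: real and v u :: "real^'n"
  assumes "A *v v = l *\<^sub>R v"
    and "u v* A = l *\<^sub>R u"
    and "u \<bullet> v = 1"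
  shows "\<forall>u' :: real^'n. u' \<bullet> v = 1 \<longrightarrow>
           (\<exists>Z :: real^'n^'n. similar_matrix Z A
              \<and> u' v* Z = l *\<^sub>R u'
              \<and> Z *v v = l *\<^sub>R v
              \<and> (\<forall>(w :: real^'n) (m :: real). m \<noteq> l \<and> w v* A = m *\<^sub>R w \<longrightarrow> w v* Z = m *\<^sub>R w))"
proof (intro allI impI)
  fix u' :: "real^'n" assume u': "u' \<bullet> v = 1"
  define d where "d = u - u'"
  have dv: "d \<bullet> v = 0"
    using u' assms(3) by (simp add: d_def inner_diff_left)
  define T T' where "T = transvection v d" and "T' = transvection v (- d)"
  have TT': "T ** T' = mat 1" and T'T: "T' ** T = mat 1"
    using transvection_mult_transvection_uminus[of d v]
      transvection_mult_transvection_uminus[of "- d" v] dv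
    by (simp_all add: T_def T'_def)
  have fix_orthogonal: "w v* T = w" "w v* T' = w" if "w \<bullet> v = 0" for w
    using that by (simp_all add: T_def T'_def vector_matrix_mult_transvection)
  have "u' v* T = u" "u v* T' = u'" "T' *v v = v" "T *v v = v"
    using u' assms(3) dv
    by (simp_all add: inner_diff_left T_def T'_def d_def
        vector_matrix_mult_transvection matrix_vector_mult_transvection)
  then have "similar_matrix (T ** A ** T') A" "u' v* (T ** A ** T') = l *\<^sub>R u'"
    "(T ** A ** T') *v v = l *\<^sub>R v"
    using similar_matrix_conjugate[OF TT' T'T] assms(1,2)
    by (auto intro: left_eigenvector_conjugate right_eigenvector_conjugate)
  moreover have "w v* (T ** A ** T') = m *\<^sub>R w" if "m \<noteq> l" "w v* A = m *\<^sub>R w" for w m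
  proof (rule left_eigenvector_conjugate[where y = w])
    show "w v* T = w" "w v* T' = w"
      using fix_orthogonal left_right_eigenvectors_orthogonal[OF assms(1) that(2,1)] by simp_all
  qed (fact that(2))
  ultimately show "\<exists>Z. similar_matrix Z A \<and> u' v* Z = l *\<^sub>R u' \<and> Z *v v = l *\<^sub>R v
      \<and> (\<forall>w m. m \<noteq> l \<and> w v* A = m *\<^sub>R w \<longrightarrow> w v* Z = m *\<^sub>R w)"
    by blast
qed

end
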